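(* Let $q$ be a prime, $m\in\mathbb Z$, $n\in\mathbb N$ with $\gcd(m,n)=1$, and let $\Phi_q:\mathbb Z\to\mathbb F_q$ be the quotient map; when $q\nmid n$, let $[m/n]_q\in\mathbb F_q$ be the element with $\Phi_q(n)[m/n]_q=\Phi_q(m)$. All convergences below are in $\mathbb A$. (b) The sets $U_{\mathbb R}$, $U_q$ and $\mu_{\mathbb Z(q)}(\mathbb F_q)\cup U_q$ are open in $\mathbb A^{\min}$. (c) The subspaces $\mu_{\mathbb Q_0}(\mathbb Q)$ and $\bigcup_{p}\mu_{\mathbb Z(p)}(\mathbb F_p)$ are discrete. (d) Let $(p_i,\omega_i)_{i\in\mathbb N}$ be a sequence in $\{\text{primes}\}\times(0,\infty)$ and $s_i\in\mathbb Q_{p_i}$. Then $\mu_{\mathbb Q_{p_i}^{\omega_i}}(s_i)\to\mu_{\mathbb Z(q)}(\Phi_q(n))$ if and only if $\omega_i\to\infty$ and there is $i_0$ such that for all $i\ge i_0$, $p_i=q$ and $s_i\in n+q\mathbb Z_q$, where $\mathbb Z_q=\{s\in\mathbb Q_q:|s|_q\le1\}$. (e) Let $(p_i,k_i)_{i\in\mathbb N}$ be a sequence in $\{\text{primes}\}\times\mathbb Z$. Then $\mu_{\mathbb Z(p_i)}(\Phi_{p_i}(k_i))\to\mu_{\mathbb Q_0}(m/n)$ if and only if $p_i\to\infty$ and there is $i_0$ with $\Phi_{p_i}(k_i)=[m/n]_{p_i}$ for all $i\ge i_0$. (f) Let $\upsilon_i\in(0,1]$ and $t_i\in\mathbb R$.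 Then $\mu_{\mathbb R_{\upsilon_i}}(t_i)\to\mu_{\mathbb Q_0}(m/n)$ if and only if $\upsilon_i\to0$ and $|t_i-m/n|^{\upsilon_i}\to0$ ($|\cdot|$ Euclidean). (g) Let $(p_i,\omega_i)$ be a sequence in $\{\text{primes}\}\times(0,\infty)$ and $s_i\in\mathbb Q_{p_i}$. Then $\mu_{\mathbb Q_{p_i}^{\omega_i}}(s_i)\to\mu_{\mathbb Q_0}(m/n)$ if and only if $|k|_{p_i}^{\omega_i}\to1$ for every $k\in\mathbb N$ and $|s_i-m/n|_{p_i}^{\omega_i}\to0$.
   Context: $\mathbb A$ is the set of non-zero multiplicative semi-norms on $\mathbb Z[t]$ with the topology of pointwise convergence on $\mathbb Z[t]$. For a complete valuation field $K$ and $s\in K$, $\mu_K(s)\in\mathbb A$ is $p\mapsto|p(s)|_K$. Minimal fields: $\mathbb Q_0$ ($\mathbb Q$ with trivial absolute value), $\mathbb Z(p)$ ($\mathbb F_p$ with trivial absolute value), $\mathbb R_\upsilon$ ($\mathbb R$ with $|x|^\upsilon$, $|\cdot|$ Euclidean, $\upsilon\in(0,1]$), $\mathbb Q_p^\omega$ ($\mathbb Q_p$ with $|x|_p^\omega$, $\omega>0$). $\mathbb A^{\min}$ is the union of $\mu_K(K)$ over all these minimal fields $K$, with the subspace topology from $\mathbb A$; $U_{\mathbb R}:=\bigcup_{\upsilon\in(0,1]}\mu_{\mathbb R_\upsilon}(\mathbb R)$ and $U_q:=\bigcup_{\omega\in(0,\infty)}\mu_{\mathbb Q_q^\omega}(\mathbb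 Q_q)$. *)

theory Defs
  imports "HOL-Analysis.Analysis" "HOL-Computational_Algebra.Polynomial"
    "HOL-Computational_Algebra.Primes" "HOL-Number_Theory.Cong"
begin

text \<open>Elements of the space A are functions  int poly => real  (semi-norms on Z[t]);
  the topology of pointwise convergence is the product topology on this function type
  (instance from HOL-Analysis Function_Topology).\<close>

type_synonym seminorm = "int poly \<Rightarrow> real"

definition muQ0 :: "rat \<Rightarrow> seminorm" where
  "muQ0 r = (\<lambda>f. if poly (map_poly of_int f) r = 0 then 0 else 1)"

section \<open>Z(p): F_p with trivial absolute value; elements of F_p are residues in {0..<p}\<close>

definition Phi :: "nat \<Rightarrow> int \<Rightarrow> int" where
  "Phi p k = k mod int p"

definition frac_mod :: "nat \<Rightarrow> int \<Rightarrow> int \<Rightarrow> int" where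
  "frac_mod p m n = (THE x. 0 \<le> x \<and> x < int p \<and> [n * x = m] (mod int p))"

definition muF :: "nat \<Rightarrow> int \<Rightarrow> seminorm" where
  "muF p a = (\<lambda>f. if [poly f a = 0] (mod int p) then 0 else 1)"

definition muR :: "real \<Rightarrow> real \<Rightarrow> seminorm" where
  "muR v t = (\<lambda>f. \<bar>poly (map_poly of_int f) t\<bar> powr v)"

section \<open>Q_p^w: p-adic numbers, represented by p-adic Cauchy sequences of rationals\<close>

definition padic_val :: "nat \<Rightarrow> rat \<Rightarrow> int" where
  "padic_val p r = (case quotient_of r of (a, b) \<Rightarrow>
      int (multiplicity (int p) a) - int (multiplicity (int p) b))"

definition padic_abs :: "nat \<Rightarrow> rat \<Rightarrow> real" where
  "padic_abs p r = (if r = 0 then 0 else real p powr (- real_of_int (padic_val p r)))"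

definition padic_cauchy :: "nat \<Rightarrow> (nat \<Rightarrow> rat) \<Rightarrow> bool" where
  "padic_cauchy p x \<longleftrightarrow>
     (\<forall>e>0. \<exists>N. \<forall>j\<ge>N. \<forall>k\<ge>N. padic_abs p (x j - x k) < e)"

definition padic_norm :: "nat \<Rightarrow> (nat \<Rightarrow> rat) \<Rightarrow> real" where
  "padic_norm p x = lim (\<lambda>k. padic_abs p (x k))"

definition muQp :: "nat \<Rightarrow> real \<Rightarrow> (nat \<Rightarrow> rat) \<Rightarrow> seminorm" where
  "muQp p w x = (\<lambda>f. padic_norm p (\<lambda>k. poly (map_poly of_int f) (x k)) powr w)"

definition UQ0 :: "seminorm set" where
  "UQ0 = range muQ0"

definition UF :: "nat \<Rightarrow> seminorm set" where
  "UF p = muF p ` {0..<int p}"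

definition UR :: "seminorm set" where
  "UR = {muR v t | v t. v \<in> {0<..1}}"

definition Uq :: "nat \<Rightarrow> seminorm set" where
  "Uq q = {muQp q w x | w x. w > 0 \<and> padic_cauchy q x}"

definition Amin :: "seminorm set" where
  "Amin = UQ0 \<union> (\<Union>p\<in>{p. prime p}. UF p) \<union> UR \<union> (\<Union>p\<in>{p. prime p}. Uq p)"

definition discrete_subspace :: "seminorm set \<Rightarrow> bool" where
  "discrete_subspace S \<longleftrightarrow> (\<forall>x\<in>S. openin (top_of_set S) {x})"

end

theory Submission
  imports Defs
begin

text \<open>Parts (b) and (c) only need finitely many coordinates:
  the values at the constants 2 and q tell the places apart, and the value at n t - m pins
  down a point. For the limits in (d)-(g) the decisive facts are ultrametric: an integer
  polynomial is 1-Lipschitz on the p-adic unit ball, so after clearing the denominator n,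
  |f(s)|_p equals |f(m/n)|_p as soon as s is close enough to m/n; and f(m/n) = 0 exactly
  when f vanishes at [m/n]_p modulo every sufficiently large prime p.\<close>

section \<open>The p-adic absolute value on the rationals\<close>

lemma rat_eq_of_int_div_of_int:
  fixes r :: rat
  obtains a b :: int where "b \<noteq> 0" "r = of_int a / of_int b"
proof -
  obtain a b where q: "quotient_of r = (a, b)" by fastforce
  show ?thesis using quotient_of_div[OF q] quotient_of_denom_pos[OF q] by (intro that[of b a]) auto
qed

lemma multiplicity_prime_mult:
  "prime (p::nat) \<Longrightarrow> x \<noteq> 0 \<Longrightarrow> y \<noteq> 0 \<Longrightarrow>
   multiplicity (int p) (x * y) = multiplicity (int p) x + multiplicity (int p) y"
  by (rule prime_elem_multiplicity_mult_distrib) auto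

lemma padic_val_of_int_div:
  assumes p: "prime p" and a: "a \<noteq> 0" and b: "b \<noteq> 0"
  shows "padic_val p (of_int a / of_int b) =
     int (multiplicity (int p) a) - int (multiplicity (int p) b)"
proof -
  obtain a' b' where q: "quotient_of (of_int a / of_int b) = (a', b')" by fastforce
  have r: "(of_int a / of_int b :: rat) = of_int a' / of_int b'" using quotient_of_div[OF q] .
  have b': "b' > 0" using quotient_of_denom_pos[OF q] .
  have "a' * b = a * b'"
    using r b b' by (simp add: frac_eq_eq) (metis of_int_eq_iff of_int_mult)
  moreover have a': "a' \<noteq> 0" using r a b b' by auto
  ultimately have "multiplicity (int p) a' + multiplicity (int p) b =
                   multiplicity (int p) a + multiplicity (int p) b'"
    using multiplicity_prime_mult[OF p, of a' b] multiplicity_prime_mult[OF p, of a b'] a a' b b'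
    by simp
  thus ?thesis unfolding padic_val_def q by simp
qed

lemma padic_val_of_int:
  "prime p \<Longrightarrow> a \<noteq> 0 \<Longrightarrow> padic_val p (of_int a) = int (multiplicity (int p) a)"
  using padic_val_of_int_div[of p a 1] by simp

lemma padic_val_mult:
  assumes p: "prime p" and "x \<noteq> 0" "y \<noteq> 0"
  shows "padic_val p (x * y) = padic_val p x + padic_val p y"
proof -
  obtain a b where ab: "b \<noteq> 0" "x = of_int a / of_int b" by (rule rat_eq_of_int_div_of_int)
  obtain c d where cd: "d \<noteq> 0" "y = of_int c / of_int d" by (rule rat_eq_of_int_div_of_int)
  have "a \<noteq> 0" "c \<noteq> 0" using ab cd assms by auto
  moreover have "x * y = of_int (a * c) / of_int (b * d)" using ab cd by simp
  ultimately have "padic_val p (x * y) = int (multiplicity (int p) (a * c)) - int (multiplicity (int p) (b * d))"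
    using padic_val_of_int_div[OF p, of "a * c" "b * d"] ab cd by simp
  thus ?thesis
    using padic_val_of_int_div[OF p] ab cd \<open>a \<noteq> 0\<close> \<open>c \<noteq> 0\<close>
      multiplicity_prime_mult[OF p, of a c] multiplicity_prime_mult[OF p, of b d] by simp
qed

lemma multiplicity_add_ge_min:
  assumes "prime (p::nat)" "a + c \<noteq> 0"
  shows "multiplicity (int p) (a + c) \<ge> min (multiplicity (int p) a) (multiplicity (int p) c)"
proof -
  let ?k = "min (multiplicity (int p) a) (multiplicity (int p) c)"
  have "int p ^ ?k dvd a" "int p ^ ?k dvd c"
    by (meson min.cobounded1 min.cobounded2 multiplicity_dvd dvd_trans le_imp_power_dvd)+
  hence "int p ^ ?k dvd a + c" by simp
  thus ?thesis using assms by (intro multiplicity_geI) (auto simp: prime_gt_1_nat)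
qed

lemma padic_val_add_ge_min:
  assumes p: "prime p" and "x \<noteq> 0" "y \<noteq> 0" "x + y \<noteq> 0"
  shows "padic_val p (x + y) \<ge> min (padic_val p x) (padic_val p y)"
proof -
  obtain a b where ab: "b \<noteq> 0" "x = of_int a / of_int b" by (rule rat_eq_of_int_div_of_int)
  obtain c d where cd: "d \<noteq> 0" "y = of_int c / of_int d" by (rule rat_eq_of_int_div_of_int)
  have x: "x = of_int (a * d) / of_int (b * d)" and y: "y = of_int (c * b) / of_int (b * d)"
    using ab cd by auto
  have xy: "x + y = of_int (a * d + c * b) / of_int (b * d)"
    using x y by (simp add: add_divide_distrib)
  have sum_nz: "a * d + c * b \<noteq> 0"
  proof
    assume "a * d + c * b = 0"
    hence "x + y = 0" unfolding xy by simp
    thus False using assms(4) by simp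
  qed
  have nz: "a * d \<noteq> 0" "c * b \<noteq> 0" "b * d \<noteq> 0" using ab cd assms by auto
  have "padic_val p (x + y) = int (multiplicity (int p) (a * d + c * b)) - int (multiplicity (int p) (b * d))"
    unfolding xy by (rule padic_val_of_int_div[OF p sum_nz nz(3)])
  moreover have "padic_val p x = int (multiplicity (int p) (a * d)) - int (multiplicity (int p) (b * d))"
    unfolding x by (rule padic_val_of_int_div[OF p nz(1,3)])
  moreover have "padic_val p y = int (multiplicity (int p) (c * b)) - int (multiplicity (int p) (b * d))"
    unfolding y by (rule padic_val_of_int_div[OF p nz(2,3)])
  ultimately show ?thesis using multiplicity_add_ge_min[OF p, of "a * d" "c * b"] sum_nz
    by linarith
qed

lemma padic_abs_nonneg: "padic_abs p x \<ge> 0"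
  by (simp add: padic_abs_def)

lemma padic_abs_0 [simp]: "padic_abs p 0 = 0"
  by (simp add: padic_abs_def)

lemma padic_abs_pos: "prime p \<Longrightarrow> x \<noteq> 0 \<Longrightarrow> padic_abs p x > 0"
  using prime_gt_0_nat by (simp add: padic_abs_def)

lemma padic_abs_mult:
  assumes p: "prime p" shows "padic_abs p (x * y) = padic_abs p x * padic_abs p y"
  using padic_val_mult[OF p, of x y] prime_gt_0_nat[OF p]
proof (cases "x = 0 \<or> y = 0")
  case False
  thus ?thesis using padic_val_mult[OF p, of x y] prime_gt_0_nat[OF p]
    by (simp add: padic_abs_def powr_add[symmetric])
qed auto

lemma padic_abs_ultrametric:
  assumes p: "prime p" shows "padic_abs p (x + y) \<le> max (padic_abs p x) (padic_abs p y)"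
proof (cases "x = 0 \<or> y = 0 \<or> x + y = 0")
  case True thus ?thesis using padic_abs_nonneg[of p x] padic_abs_nonneg[of p y] by auto
next
  case False
  have "real p > 1" using prime_gt_1_nat[OF p] by simp
  hence "real p powr - real_of_int (padic_val p (x + y))
          \<le> max (real p powr - real_of_int (padic_val p x)) (real p powr - real_of_int (padic_val p y))"
    using padic_val_add_ge_min[OF p, of x y] False by (auto simp: min_def max_def split: if_splits)
  thus ?thesis using False by (simp add: padic_abs_def)
qed

lemma padic_abs_of_int:
  assumes "prime p" "k \<noteq> 0"
  shows "padic_abs p (of_int k) = real p powr - real (multiplicity (int p) k)"
  using padic_val_of_int[OF assms] assms by (simp add: padic_abs_def)

lemma padic_abs_of_int_le_1:
  assumes p: "prime p" shows "padic_abs p (of_int k) \<le> 1"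
proof (cases "k = 0")
  case False
  have "real p powr - real (multiplicity (int p) k) \<le> real p powr 0"
    using prime_gt_1_nat[OF p] by (intro powr_mono) auto
  thus ?thesis using padic_abs_of_int[OF p False] prime_gt_1_nat[OF p] by simp
qed simp

lemma padic_abs_of_int_eq_1_iff:
  assumes p: "prime p" shows "padic_abs p (of_int k) = 1 \<longleftrightarrow> \<not> int p dvd k"
proof (cases "k = 0")
  case False
  have "real p > 1" using prime_gt_1_nat[OF p] by simp
  hence "padic_abs p (of_int k) = 1 \<longleftrightarrow> multiplicity (int p) k = 0"
    using padic_abs_of_int[OF p False] by (simp add: powr_eq_one_iff_gen)
  also have "\<dots> \<longleftrightarrow> \<not> int p dvd k"
    using False p
    by (metis multiplicity_eq_zero_iff not_dvd_imp_multiplicity_0 not_prime_unit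
              prime_nat_int_transfer)
  finally show ?thesis .
qed simp

lemma padic_abs_1 [simp]: "prime p \<Longrightarrow> padic_abs p 1 = 1"
  using padic_abs_of_int_eq_1_iff[of p 1] by (simp add: prime_nat_iff)

lemma padic_abs_power: "prime p \<Longrightarrow> padic_abs p (x ^ k) = padic_abs p x ^ k"
  by (induction k) (simp_all add: padic_abs_mult)

lemma padic_abs_minus: assumes p: "prime p" shows "padic_abs p (- x) = padic_abs p x"
proof -
  have "padic_abs p (-1) = 1"
    using padic_abs_of_int_eq_1_iff[OF p, of "-1"] p by (simp add: prime_nat_iff)
  thus ?thesis using padic_abs_mult[OF p, of "-1" x] by simp
qed

lemma padic_abs_minus_commute: "prime p \<Longrightarrow> padic_abs p (x - y) = padic_abs p (y - x)"
  using padic_abs_minus[of p "x - y"] by simp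

lemma padic_abs_le_max_diff:
  "prime p \<Longrightarrow> padic_abs p x \<le> max (padic_abs p y) (padic_abs p (x - y))"
  using padic_abs_ultrametric[of p y "x - y"] by simp

lemma padic_abs_eq_if_diff_less:
  assumes p: "prime p" and lt: "padic_abs p (x - y) < padic_abs p y"
  shows "padic_abs p x = padic_abs p y"
  using padic_abs_le_max_diff[OF p, of x y] padic_abs_le_max_diff[OF p, of y x]
    padic_abs_minus_commute[OF p, of x y] lt
  by (auto simp: max_def split: if_splits)

lemma abs_padic_abs_diff_le:
  "prime p \<Longrightarrow> \<bar>padic_abs p x - padic_abs p y\<bar> \<le> padic_abs p (x - y)"
proof -
  assume p: "prime p"
  have "padic_abs p x \<le> max (padic_abs p y) (padic_abs p (x - y))"
       "padic_abs p y \<le> max (padic_abs p x) (padic_abs p (x - y))"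
    using padic_abs_le_max_diff[OF p, of x y] padic_abs_le_max_diff[OF p, of y x]
      padic_abs_minus_commute[OF p, of x y] by auto
  thus ?thesis using padic_abs_nonneg[of p x] padic_abs_nonneg[of p y] padic_abs_nonneg[of p "x - y"]
    by (auto simp: abs_if max_def split: if_splits)
qed

lemma padic_abs_less_1_imp_le:
  assumes p: "prime p" and "padic_abs p x < 1" shows "padic_abs p x \<le> 1 / real p"
proof (cases "x = 0")
  case False
  have P: "real p > 1" using prime_gt_1_nat[OF p] by simp
  have "real p powr - real_of_int (padic_val p x) < real p powr 0"
    using assms(2) False P by (simp add: padic_abs_def)
  hence "- real_of_int (padic_val p x) < 0" using powr_less_cancel_iff[OF P] by blast
  hence "padic_val p x \<ge> 1" by simp
  hence "real p powr - real_of_int (padic_val p x) \<le> real p powr -1"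
    using P by (intro powr_mono) auto
  thus ?thesis using False P by (simp add: padic_abs_def powr_minus divide_inverse)
qed simp

lemma padic_abs_of_nat_self: assumes p: "prime p" shows "padic_abs p (of_nat p) = 1 / real p"
proof -
  have "multiplicity (int p) (int p) = 1"
    using p by (simp add: multiplicity_self prime_nat_int_transfer prime_imp_prime_elem
                          prime_elem_not_unit)
  thus ?thesis using padic_abs_of_int[OF p, of "int p"] prime_gt_0_nat[OF p]
    by (simp add: powr_minus divide_inverse)
qed

section \<open>Integer polynomials on the p-adic unit ball\<close>

lemma smult_power_degree_eq_pcompose:
  fixes f :: "'a :: comm_semiring_1 poly"
  shows "\<exists>G. smult (n ^ degree f) f = G \<circ>\<^sub>p [:0, n:]"
proof -
  have "\<exists>G. smult (n ^ D) f = G \<circ>\<^sub>p [:0, n:]" if "degree f \<le> D" for D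
    using that
  proof (induction f arbitrary: D rule: pCons_induct)
    case 0 thus ?case by (intro exI[of _ 0]) simp
  next
    case (pCons a g)
    show ?case
    proof (cases D)
      case 0
      hence "g = 0" using pCons by (auto split: if_splits)
      thus ?thesis using 0 by (intro exI[of _ "[:a:]"]) simp
    next
      case (Suc D')
      have "degree g \<le> D'" using pCons.prems Suc by (auto split: if_splits)
      then obtain G where "smult (n ^ D') g = G \<circ>\<^sub>p [:0, n:]" using pCons.IH by blast
      hence "smult (n ^ D) g = smult n (G \<circ>\<^sub>p [:0, n:])" using Suc by (simp flip: smult_smult)
      hence "smult (n ^ D) (pCons a g) = pCons (a * n ^ D) G \<circ>\<^sub>p [:0, n:]"
        by (simp add: pcompose_pCons algebra_simps)
      thus ?thesis by blast
    qed
  qed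
  thus ?thesis by blast
qed

lemma map_poly_of_int_pcompose_linear:
  "map_poly (of_int :: int \<Rightarrow> 'a :: comm_ring_1) (G \<circ>\<^sub>p [:0, n:]) =
   map_poly of_int G \<circ>\<^sub>p [:0, of_int n:]"
  by (rule poly_eqI) (simp add: coeff_map_poly coeff_pcompose_linear)

lemma poly_of_int_pcompose_scale:
  fixes f G :: "int poly"
  assumes "smult (n ^ degree f) f = G \<circ>\<^sub>p [:0, n:]"
  shows "of_int n ^ degree f * poly (map_poly of_int f) (x :: 'a :: comm_ring_1) =
         poly (map_poly of_int G) (of_int n * x)"
proof -
  have "poly (map_poly of_int (smult (n ^ degree f) f)) x = poly (map_poly of_int (G \<circ>\<^sub>p [:0, n:])) x"
    by (simp only: assms)
  thus ?thesis by (simp add: map_poly_of_int_pcompose_linear poly_pcompose map_poly_smult mult.commute)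
qed

lemma poly_map_poly_of_int_pCons [simp]:
  "poly (map_poly of_int (pCons a f)) (x :: 'a :: comm_ring_1) = of_int a + x * poly (map_poly of_int f) x"
  by (simp add: map_poly_pCons)

lemma padic_abs_poly_le_1:
  assumes p: "prime p" and x: "padic_abs p x \<le> 1"
  shows "padic_abs p (poly (map_poly of_int f) x) \<le> 1"
proof (induction f rule: pCons_induct)
  case (pCons a g)
  have "padic_abs p (x * poly (map_poly of_int g) x) \<le> 1"
    using pCons.IH x padic_abs_nonneg[of p] by (simp add: padic_abs_mult[OF p] mult_le_one)
  thus ?case
    using padic_abs_ultrametric[OF p, of "of_int a" "x * poly (map_poly of_int g) x"]
      padic_abs_of_int_le_1[OF p, of a] by simp
qed simp

lemma padic_abs_poly_diff_le:
  assumes p: "prime p" and x: "padic_abs p x \<le> 1" and y: "padic_abs p y \<le> 1"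
  shows "padic_abs p (poly (map_poly of_int f) x - poly (map_poly of_int f) y) \<le> padic_abs p (x - y)"
proof (induction f rule: pCons_induct)
  case (pCons a g)
  let ?gx = "poly (map_poly of_int g) x" and ?gy = "poly (map_poly of_int g) y"
  have "padic_abs p (x * (?gx - ?gy)) \<le> padic_abs p (x - y)"
    unfolding padic_abs_mult[OF p]
    by (rule order_trans[OF mult_left_le_one_le pCons.IH]) (use x padic_abs_nonneg[of p] in auto)
  moreover have "padic_abs p ((x - y) * ?gy) \<le> padic_abs p (x - y)"
    using padic_abs_poly_le_1[OF p y, of g] padic_abs_nonneg[of p]
    by (simp add: padic_abs_mult[OF p] mult_right_le_one_le)
  moreover have "(of_int a + x * ?gx) - (of_int a + y * ?gy) = x * (?gx - ?gy) + (x - y) * ?gy"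
    by (simp add: algebra_simps)
  ultimately show ?case
    using padic_abs_ultrametric[OF p, of "x * (?gx - ?gy)" "(x - y) * ?gy"] by simp
qed (simp add: padic_abs_nonneg)

lemma padic_abs_poly_scaled:
  assumes p: "prime p" and bx: "padic_abs p (of_int b * x) \<le> 1"
  shows "padic_abs p (of_int b) ^ degree f * padic_abs p (poly (map_poly of_int f) x) \<le> 1"
    and "padic_abs p (of_int b * y) \<le> 1 \<Longrightarrow>
         padic_abs p (of_int b) ^ degree f *
           padic_abs p (poly (map_poly of_int f) x - poly (map_poly of_int f) y)
         \<le> padic_abs p (x - y)"
proof -
  obtain G where "smult (b ^ degree f) f = G \<circ>\<^sub>p [:0, b:]"
    using smult_power_degree_eq_pcompose by blast
  note G = poly_of_int_pcompose_scale[OF this, where 'a = rat]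
  show "padic_abs p (of_int b) ^ degree f * padic_abs p (poly (map_poly of_int f) x) \<le> 1"
    using padic_abs_poly_le_1[OF p bx, of G]
    by (simp add: padic_abs_mult[OF p, symmetric] padic_abs_power[OF p, symmetric] G)
  show "padic_abs p (of_int b) ^ degree f *
          padic_abs p (poly (map_poly of_int f) x - poly (map_poly of_int f) y)
        \<le> padic_abs p (x - y)" if hy: "padic_abs p (of_int b * y) \<le> 1"
  proof -
    have "padic_abs p (of_int b) ^ degree f *
            padic_abs p (poly (map_poly of_int f) x - poly (map_poly of_int f) y)
          = padic_abs p (poly (map_poly of_int G) (of_int b * x) - poly (map_poly of_int G) (of_int b * y))"
      by (simp add: padic_abs_mult[OF p, symmetric] padic_abs_power[OF p, symmetric] right_diff_distrib G)
    also have "\<dots> \<le> padic_abs p (of_int b * x - of_int b * y)"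
      by (rule padic_abs_poly_diff_le[OF p bx hy])
    also have "\<dots> \<le> padic_abs p (x - y)"
      using padic_abs_of_int_le_1[OF p, of b] padic_abs_nonneg[of p]
      by (simp add: right_diff_distrib[symmetric] padic_abs_mult[OF p] mult_left_le_one_le)
    finally show ?thesis .
  qed
qed

section \<open>p-adic numbers as Cauchy sequences of rationals\<close>

lemma padic_cauchy_diff_const: "padic_cauchy p x \<Longrightarrow> padic_cauchy p (\<lambda>j. x j - c)"
  unfolding padic_cauchy_def by simp

lemma padic_norm_tendsto:
  assumes p: "prime p" and x: "padic_cauchy p x"
  shows "(\<lambda>j. padic_abs p (x j)) \<longlonglongrightarrow> padic_norm p x"
proof -
  have "Cauchy (\<lambda>j. padic_abs p (x j))"
  proof (rule metric_CauchyI)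
    fix e :: real assume "e > 0"
    then obtain N where "\<forall>j\<ge>N. \<forall>k\<ge>N. padic_abs p (x j - x k) < e"
      using x unfolding padic_cauchy_def by blast
    thus "\<exists>N. \<forall>j\<ge>N. \<forall>k\<ge>N. dist (padic_abs p (x j)) (padic_abs p (x k)) < e"
      using abs_padic_abs_diff_le[OF p] by (metis dist_real_def order.strict_trans1)
  qed
  hence "convergent (\<lambda>j. padic_abs p (x j))" by (rule Cauchy_convergent)
  thus ?thesis unfolding padic_norm_def by (simp add: convergent_LIMSEQ_iff)
qed

lemma padic_norm_nonneg: "prime p \<Longrightarrow> padic_cauchy p x \<Longrightarrow> padic_norm p x \<ge> 0"
  by (rule tendsto_lowerbound[OF padic_norm_tendsto]) (simp_all add: padic_abs_nonneg)

lemma padic_norm_eqI: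
  assumes "eventually (\<lambda>j. padic_abs p (x j) = c) sequentially"
  shows "padic_norm p x = c"
  unfolding padic_norm_def by (rule limI, rule tendsto_eventually) (use assms in simp)

lemma padic_norm_le:
  assumes "prime p" "padic_cauchy p x" "eventually (\<lambda>j. padic_abs p (x j) \<le> c) sequentially"
  shows "padic_norm p x \<le> c"
  by (rule tendsto_upperbound[OF padic_norm_tendsto[OF assms(1,2)] assms(3)]) simp

lemma eventually_padic_abs_less:
  assumes "prime p" "padic_cauchy p x" "padic_norm p x < c"
  shows "eventually (\<lambda>j. padic_abs p (x j) < c) sequentially"
  using order_tendstoD(2)[OF padic_norm_tendsto[OF assms(1,2)] assms(3)] .

lemma padic_norm_less_1_imp_le:
  assumes "prime p" "padic_cauchy p x" "padic_norm p x < 1"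
  shows "padic_norm p x \<le> 1 / real p"
  using eventually_padic_abs_less[OF assms] padic_abs_less_1_imp_le[OF assms(1)]
  by (intro padic_norm_le[OF assms(1,2)]) (auto elim: eventually_mono)

lemma padic_norm_cmult:
  assumes p: "prime p" and x: "padic_cauchy p x"
  shows "padic_norm p (\<lambda>j. a * x j) = padic_abs p a * padic_norm p x"
proof -
  have "(\<lambda>j. padic_abs p (a * x j)) \<longlonglongrightarrow> padic_abs p a * padic_norm p x"
    using tendsto_mult_left[OF padic_norm_tendsto[OF p x]] by (simp add: padic_abs_mult[OF p])
  thus ?thesis unfolding padic_norm_def by (rule limI)
qed

text \<open>The values of a Cauchy sequence eventually lie in a ball around x N that is
  rescaled into the unit ball by a single integer b, where polynomials are Lipschitz.\<close>

lemma padic_cauchy_poly: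
  assumes p: "prime p" and x: "padic_cauchy p x"
  shows "padic_cauchy p (\<lambda>j. poly (map_poly of_int f) (x j))"
proof -
  let ?F = "poly (map_poly (of_int :: int \<Rightarrow> rat) f)"
  obtain N where N: "\<forall>j\<ge>N. \<forall>k\<ge>N. padic_abs p (x j - x k) < 1"
    using x unfolding padic_cauchy_def by (meson zero_less_one)
  obtain a b :: int where b: "b \<noteq> 0" "x N = of_int a / of_int b"
    by (rule rat_eq_of_int_div_of_int)
  have bx: "padic_abs p (of_int b * x j) \<le> 1" if "j \<ge> N" for j
  proof -
    have "padic_abs p (of_int b * (x j - x N)) \<le> 1"
      using N that padic_abs_of_int_le_1[OF p, of b] padic_abs_nonneg[of p]
      by (simp add: padic_abs_mult[OF p]) (meson less_imp_le mult_le_one order_refl)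
    moreover have "padic_abs p (of_int b * x N) \<le> 1"
      using b padic_abs_of_int_le_1[OF p, of a] by simp
    ultimately show ?thesis
      using padic_abs_le_max_diff[OF p, of "of_int b * x j" "of_int b * x N"]
      by (simp add: right_diff_distrib)
  qed
  define c where "c = padic_abs p (of_int b) ^ degree f"
  have c: "c > 0" unfolding c_def using b padic_abs_pos[OF p, of "of_int b"] by simp
  show ?thesis unfolding padic_cauchy_def
  proof (intro allI impI)
    fix e :: real assume "e > 0"
    then obtain M where M: "\<forall>j\<ge>M. \<forall>k\<ge>M. padic_abs p (x j - x k) < e * c"
      using x c unfolding padic_cauchy_def by (meson mult_pos_pos)
    have "padic_abs p (?F (x j) - ?F (x k)) < e" if "j \<ge> max M N" "k \<ge> max M N" for j k
    proof -
      have "c * padic_abs p (?F (x j) - ?F (x k)) \<le> padic_abs p (x j - x k)"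
        unfolding c_def using that by (intro padic_abs_poly_scaled(2)[OF p] bx) auto
      also have "\<dots> < e * c" using M that by simp
      finally show ?thesis using c by (simp add: mult.commute)
    qed
    thus "\<exists>M. \<forall>j\<ge>M. \<forall>k\<ge>M. padic_abs p (?F (x j) - ?F (x k)) < e" by blast
  qed
qed

lemma padic_norm_le_max_diff:
  assumes p: "prime p" and x: "padic_cauchy p x"
  shows "padic_norm p x \<le> max (padic_abs p c) (padic_norm p (\<lambda>j. x j - c))"
proof (rule tendsto_le[OF _ _ padic_norm_tendsto[OF p x]])
  show "(\<lambda>j. max (padic_abs p c) (padic_abs p (x j - c))) \<longlonglongrightarrow>
          max (padic_abs p c) (padic_norm p (\<lambda>j. x j - c))"
    by (intro tendsto_max tendsto_const padic_norm_tendsto[OF p padic_cauchy_diff_const[OF x]])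
qed (simp_all add: padic_abs_le_max_diff[OF p])

lemma padic_norm_eq_if_diff_less:
  assumes p: "prime p" and x: "padic_cauchy p x"
    and less: "padic_norm p (\<lambda>j. x j - c) < padic_abs p c"
  shows "padic_norm p x = padic_abs p c"
  using eventually_padic_abs_less[OF p padic_cauchy_diff_const[OF x] less]
  by (intro padic_norm_eqI) (auto elim: eventually_mono intro: padic_abs_eq_if_diff_less[OF p])

lemma padic_norm_poly_diff_le:
  fixes f :: "int poly"
  defines "F \<equiv> poly (map_poly of_int f)"
  assumes p: "prime p" and x: "padic_cauchy p x"
    and near: "padic_norm p (\<lambda>j. x j - r) < 1" and br: "padic_abs p (of_int b * r) \<le> 1"
  shows "padic_abs p (of_int b) ^ degree f * padic_norm p (\<lambda>j. F (x j) - F r)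
         \<le> padic_norm p (\<lambda>j. x j - r)"
proof (rule tendsto_le[OF _ padic_norm_tendsto tendsto_mult_left[OF padic_norm_tendsto]])
  show "eventually (\<lambda>j. padic_abs p (of_int b) ^ degree f * padic_abs p (F (x j) - F r)
                        \<le> padic_abs p (x j - r)) sequentially"
    using eventually_padic_abs_less[OF p padic_cauchy_diff_const[OF x] near]
  proof (rule eventually_mono)
    fix j assume "padic_abs p (x j - r) < 1"
    hence "padic_abs p (of_int b * (x j - r)) \<le> 1"
      using padic_abs_of_int_le_1[OF p, of b] padic_abs_nonneg[of p]
      by (simp add: padic_abs_mult[OF p] mult_le_one)
    hence "padic_abs p (of_int b * x j) \<le> 1"
      using br padic_abs_le_max_diff[OF p, of "of_int b * x j" "of_int b * r"]
      by (simp add: right_diff_distrib)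
    thus "padic_abs p (of_int b) ^ degree f * padic_abs p (F (x j) - F r) \<le> padic_abs p (x j - r)"
      unfolding F_def by (rule padic_abs_poly_scaled(2)[OF p _ br])
  qed
qed (use p x in \<open>simp_all add: padic_cauchy_diff_const padic_cauchy_poly F_def\<close>)

lemma padic_norm_poly_eq:
  fixes f :: "int poly"
  defines "F \<equiv> poly (map_poly of_int f)"
  assumes p: "prime p" and x: "padic_cauchy p x" and br: "padic_abs p (of_int b * r) \<le> 1"
    and near: "padic_norm p (\<lambda>j. x j - r) < padic_abs p (of_int b) ^ degree f * padic_abs p (F r)"
  shows "padic_norm p (\<lambda>j. F (x j)) = padic_abs p (F r)"
proof (rule padic_norm_eq_if_diff_less[OF p])
  have "padic_abs p (of_int b) ^ degree f * padic_abs p (F r) \<le> 1"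
    unfolding F_def by (rule padic_abs_poly_scaled(1)[OF p br])
  hence "padic_abs p (of_int b) ^ degree f * padic_norm p (\<lambda>j. F (x j) - F r)
         < padic_abs p (of_int b) ^ degree f * padic_abs p (F r)"
    using padic_norm_poly_diff_le[OF p x _ br, of f] near unfolding F_def by linarith
  thus "padic_norm p (\<lambda>j. F (x j) - F r) < padic_abs p (F r)"
    by (rule mult_left_less_imp_less) (simp add: padic_abs_nonneg)
qed (use p x in \<open>simp add: padic_cauchy_poly F_def\<close>)

section \<open>Openness and discreteness in A^min\<close>

lemma tendsto_fun_iff:
  "((X :: nat \<Rightarrow> 'a \<Rightarrow> real) \<longlonglongrightarrow> l) \<longleftrightarrow> (\<forall>f. (\<lambda>i. X i f) \<longlonglongrightarrow> l f)"
  using limitin_componentwise[of "\<lambda>i. euclidean" UNIV X l sequentially]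
  by (simp add: euclidean_product_topology)

lemma openin_Int_evaluation:
  fixes S :: "('a \<Rightarrow> 'b :: topological_space) set"
  assumes "open U"
  shows "openin (top_of_set S) (S \<inter> {\<phi>. \<phi> f \<in> U})"
proof -
  have "open ((\<lambda>\<phi>. \<phi> f) -` U)"
    by (rule open_vimage[OF assms]) (simp add: continuous_on_product_coordinates)
  thus ?thesis by (auto simp: openin_open vimage_def)
qed

lemma muQ0_const: "muQ0 r [:c:] = (if c = 0 then 0 else 1)"
  by (simp add: muQ0_def)

lemma muF_const: "muF p a [:c:] = (if int p dvd c then 0 else 1)"
  by (simp add: muF_def cong_0_iff)

lemma muR_const: "muR v t [:c:] = \<bar>real_of_int c\<bar> powr v"
  by (simp add: muR_def)

lemma muQp_const: "muQp p w x [:c:] = padic_abs p (of_int c) powr w"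
  by (simp add: muQp_def padic_norm_eqI)

lemma muQp_of_nat_self:
  assumes "prime q" "w > 0"
  shows "muQp q w x [:int q:] \<in> {0<..<1}"
proof -
  have "(1 / real q) powr w < 1"
    using assms prime_gt_1_nat[OF assms(1)] powr_less_mono2[of w "1 / real q" 1] by simp
  thus ?thesis using padic_abs_of_nat_self[OF assms(1)] prime_gt_1_nat[OF assms(1)]
    by (simp add: muQp_const)
qed

lemma muQp_of_nat_prime_other:
  assumes "prime p" "prime q" "p \<noteq> q"
  shows "muQp p w x [:int q:] = 1"
proof -
  have "\<not> p dvd q" using assms primes_dvd_imp_eq by blast
  thus ?thesis using padic_abs_of_int_eq_1_iff[OF assms(1), of "int q"] by (simp add: muQp_const)
qed

lemma Amin_cases:
  assumes "\<phi> \<in> Amin"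
  obtains (Q0) r where "\<phi> = muQ0 r"
    | (F) p a where "prime p" "\<phi> = muF p a" "0 \<le> a" "a < int p"
    | (R) v t where "\<phi> = muR v t" "0 < v" "v \<le> 1"
    | (Qp) p w x where "prime p" "\<phi> = muQp p w x" "w > 0" "padic_cauchy p x"
proof -
  have "\<phi> \<in> UQ0 \<or> (\<exists>p. prime p \<and> \<phi> \<in> UF p) \<or> \<phi> \<in> UR \<or> (\<exists>p. prime p \<and> \<phi> \<in> Uq p)"
    using assms unfolding Amin_def by blast
  thus ?thesis
  proof (elim disjE exE conjE)
    assume "\<phi> \<in> UQ0" thus ?thesis using that(1) unfolding UQ0_def by blast
  next
    fix p assume "prime p" "\<phi> \<in> UF p" thus ?thesis using that(2) unfolding UF_def by force
  next
    assume "\<phi> \<in> UR" thus ?thesis using that(3) unfolding UR_def by force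
  next
    fix p assume "prime p" "\<phi> \<in> Uq p" thus ?thesis using that(4) unfolding Uq_def by force
  qed
qed

lemma UR_eq_Amin_Int: "UR = Amin \<inter> {\<phi>. \<phi> [:2:] \<in> {1<..}}"
proof (intro equalityI subsetI)
  fix \<phi> assume "\<phi> \<in> UR"
  thus "\<phi> \<in> Amin \<inter> {\<phi>. \<phi> [:2:] \<in> {1<..}}" unfolding Amin_def UR_def by (auto simp: muR_const)
next
  fix \<phi> assume "\<phi> \<in> Amin \<inter> {\<phi>. \<phi> [:2:] \<in> {1<..}}"
  hence "\<phi> \<in> Amin" "\<phi> [:2:] > 1" by auto
  thus "\<phi> \<in> UR"
  proof (cases rule: Amin_cases)
    case (Qp p w x)
    have "padic_abs p (of_int 2) powr w \<le> 1"
      using Qp padic_abs_of_int_le_1[of p 2] padic_abs_nonneg[of p] by (intro powr_le1) auto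
    thus ?thesis using \<open>\<phi> [:2:] > 1\<close> Qp by (simp add: muQp_const)
  qed (use \<open>\<phi> [:2:] > 1\<close> in \<open>auto simp: UR_def muQ0_const muF_const split: if_splits\<close>)
qed

lemma openin_Amin_UR: "openin (top_of_set Amin) UR"
  unfolding UR_eq_Amin_Int by (rule openin_Int_evaluation) simp

lemma Uq_eq_Amin_Int:
  assumes q: "prime q"
  shows "Uq q = Amin \<inter> {\<phi>. \<phi> [:int q:] \<in> {0<..<1}}"
proof (intro equalityI subsetI)
  fix \<phi> assume "\<phi> \<in> Uq q"
  thus "\<phi> \<in> Amin \<inter> {\<phi>. \<phi> [:int q:] \<in> {0<..<1}}"
    using q muQp_of_nat_self[OF q] unfolding Amin_def Uq_def by blast
next
  fix \<phi> assume "\<phi> \<in> Amin \<inter> {\<phi>. \<phi> [:int q:] \<in> {0<..<1}}"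
  hence "\<phi> \<in> Amin" and val: "\<phi> [:int q:] \<in> {0<..<1}" by auto
  thus "\<phi> \<in> Uq q"
  proof (cases rule: Amin_cases)
    case (R v t)
    hence "real q powr v > 1" using prime_gt_1_nat[OF q] by simp
    thus ?thesis using val R by (simp add: muR_const)
  next
    case (Qp p w x)
    thus ?thesis using val muQp_of_nat_prime_other[OF Qp(1) q] unfolding Uq_def by fastforce
  qed (use val in \<open>auto simp: muQ0_const muF_const split: if_splits\<close>)
qed

lemma openin_Amin_Uq: "prime q \<Longrightarrow> openin (top_of_set Amin) (Uq q)"
  unfolding Uq_eq_Amin_Int by (rule openin_Int_evaluation) simp

lemma UF_Un_Uq_eq_Amin_Int:
  assumes q: "prime q"
  shows "UF q \<union> Uq q = Amin \<inter> {\<phi>. \<phi> [:int q:] \<in> {..<1}}"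
proof (intro equalityI subsetI)
  fix \<phi> assume "\<phi> \<in> UF q \<union> Uq q"
  thus "\<phi> \<in> Amin \<inter> {\<phi>. \<phi> [:int q:] \<in> {..<1}}"
    using q muQp_of_nat_self[OF q] unfolding Amin_def Uq_def UF_def by (auto simp: muF_const)
next
  fix \<phi> assume "\<phi> \<in> Amin \<inter> {\<phi>. \<phi> [:int q:] \<in> {..<1}}"
  hence "\<phi> \<in> Amin" and val: "\<phi> [:int q:] < 1" by auto
  thus "\<phi> \<in> UF q \<union> Uq q"
  proof (cases rule: Amin_cases)
    case (F p a)
    hence "p = q" using val q by (auto simp: muF_const primes_dvd_imp_eq split: if_splits)
    thus ?thesis using F unfolding UF_def by auto
  next
    case (R v t)
    hence "real q powr v > 1" using prime_gt_1_nat[OF q] by simp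
    thus ?thesis using val R by (simp add: muR_const)
  next
    case (Qp p w x)
    thus ?thesis using val muQp_of_nat_prime_other[OF Qp(1) q] unfolding Uq_def by fastforce
  qed (use val q in \<open>auto simp: muQ0_const split: if_splits\<close>)
qed

lemma openin_Amin_UF_Un_Uq: "prime q \<Longrightarrow> openin (top_of_set Amin) (UF q \<union> Uq q)"
  unfolding UF_Un_Uq_eq_Amin_Int by (rule openin_Int_evaluation) simp

lemma discrete_subspace_UQ0: "discrete_subspace UQ0"
  unfolding discrete_subspace_def
proof
  fix \<phi> assume "\<phi> \<in> UQ0"
  then obtain r where r: "\<phi> = muQ0 r" unfolding UQ0_def by blast
  obtain a b where ab: "quotient_of r = (a, b)" by fastforce
  have r_eq: "r = of_int a / of_int b" and b: "b > 0"
    using quotient_of_div[OF ab] quotient_of_denom_pos[OF ab] by auto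
  have "UQ0 \<inter> {\<psi>. \<psi> [:-a, b:] \<in> {..<1}} = {\<phi>}"
  proof (intro equalityI subsetI)
    fix \<psi> assume "\<psi> \<in> UQ0 \<inter> {\<psi>. \<psi> [:-a, b:] \<in> {..<1}}"
    then obtain r' where r': "\<psi> = muQ0 r'" "muQ0 r' [:-a, b:] < 1" unfolding UQ0_def by auto
    hence "of_int b * r' = of_int a" by (simp add: muQ0_def mult.commute split: if_splits)
    hence "r' = r" unfolding r_eq using b by (simp add: eq_divide_eq mult.commute)
    thus "\<psi> \<in> {\<phi>}" using r r' by simp
  qed (use r r_eq b \<open>\<phi> \<in> UQ0\<close> in \<open>auto simp: muQ0_def\<close>)
  thus "openin (top_of_set UQ0) {\<phi>}"
    by (metis openin_Int_evaluation open_lessThan)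
qed

lemma discrete_subspace_UF: "discrete_subspace (\<Union>p\<in>{p. prime p}. UF p)"
  unfolding discrete_subspace_def
proof
  let ?U = "\<Union>p\<in>{p. prime p}. UF p"
  fix \<phi> assume "\<phi> \<in> ?U"
  then obtain p a where pa: "prime p" "\<phi> = muF p a" "0 \<le> a" "a < int p" unfolding UF_def by auto
  let ?V = "?U \<inter> {\<psi>. \<psi> [:int p:] \<in> {..<1}}"
  have "?V \<inter> {\<psi>. \<psi> [:-a, 1:] \<in> {..<1}} = {\<phi>}"
  proof (intro equalityI subsetI)
    fix \<psi> assume "\<psi> \<in> ?V \<inter> {\<psi>. \<psi> [:-a, 1:] \<in> {..<1}}"
    then obtain p' a' where pa': "prime p'" "\<psi> = muF p' a'" "0 \<le> a'" "a' < int p'"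
      and lt: "muF p' a' [:int p:] < 1" "muF p' a' [:-a, 1:] < 1" unfolding UF_def by auto
    have "p' = p" using lt(1) pa pa' by (auto simp: muF_const primes_dvd_imp_eq split: if_splits)
    moreover have "[a' = a] (mod int p')"
      using lt(2) by (simp add: muF_def cong_diff_iff_cong_0 split: if_splits)
    ultimately have "a' = a" using pa pa' by (simp add: cong_def)
    thus "\<psi> \<in> {\<phi>}" using pa pa' \<open>p' = p\<close> by simp
  qed (use pa \<open>\<phi> \<in> ?U\<close> in \<open>auto simp: muF_def cong_0_iff\<close>)
  moreover have "openin (top_of_set ?U) (?V \<inter> {\<psi>. \<psi> [:-a, 1:] \<in> {..<1}})"
    by (intro openin_trans[OF openin_Int_evaluation openin_Int_evaluation]) simp_all
  ultimately show "openin (top_of_set ?U) {\<phi>}" by simp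
qed

section \<open>Convergence of residue-field points to Q_0\<close>

lemma poly_map_poly_of_int_of_int:
  "poly (map_poly of_int f) (of_int x :: 'a :: comm_ring_1) = of_int (poly f x)"
  by (induction f rule: pCons_induct) simp_all

lemma cong_poly: "[x = y] (mod m) \<Longrightarrow> [poly f x = poly f (y :: int)] (mod m)"
  by (induction f rule: pCons_induct) (simp_all add: cong_add cong_mult)

lemma muF_Phi: "muF p (Phi p a) = muF p a"
proof
  fix f
  have "[poly f (a mod int p) = poly f a] (mod int p)" by (rule cong_poly) (simp add: cong_def)
  thus "muF p (Phi p a) f = muF p a f"
    unfolding muF_def Phi_def by (meson cong_sym cong_trans)
qed

lemma frac_mod_eq_iff:
  assumes p: "prime p" and n: "\<not> int p dvd n"
  shows "frac_mod p m n = x \<longleftrightarrow> 0 \<le> x \<and> x < int p \<and> [n * x = m] (mod int p)"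
proof -
  have coprime: "coprime n (int p)"
    using p n by (metis coprime_commute prime_imp_coprime prime_nat_int_transfer)
  then obtain y where y: "[n * y = m] (mod int p)" using cong_solve_dvd_int[of n "int p" m] by auto
  have p0: "int p > 0" using prime_gt_0_nat[OF p] by simp
  let ?P = "\<lambda>x. 0 \<le> x \<and> x < int p \<and> [n * x = m] (mod int p)"
  have "?P (y mod int p)"
    using y p0 by (simp add: cong_def mod_mult_right_eq)
  moreover have "z = y mod int p" if "?P z" for z
  proof -
    have "[n * z = n * y] (mod int p)" using that y by (meson cong_sym cong_trans)
    hence "[z = y] (mod int p)" using cong_mult_lcancel[OF coprime] by blast
    thus ?thesis using that by (simp add: cong_def)
  qed
  ultimately have "\<exists>!z. ?P z" by blast
  hence "?P (frac_mod p m n)" unfolding frac_mod_def by (rule theI')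
  thus ?thesis using \<open>\<exists>!z. ?P z\<close> by blast
qed

text \<open>Reducing f(m/n) modulo a large prime p: with G(n x) = n^(deg f) f(x), the residue
  of f at [m/n]_p vanishes exactly when p divides G(m), i.e. (for p > |G(m)|) when G(m) = 0.\<close>

lemma muF_eq_muQ0_for_large_primes:
  fixes f :: "int poly" and m n :: int
  assumes n: "n \<noteq> 0"
  obtains B where "\<And>p a. prime p \<Longrightarrow> B < p \<Longrightarrow> [n * a = m] (mod int p) \<Longrightarrow>
                            muF p a f = muQ0 (of_int m / of_int n) f"
proof -
  obtain G where "smult (n ^ degree f) f = G \<circ>\<^sub>p [:0, n:]"
    using smult_power_degree_eq_pcompose by blast
  note G = poly_of_int_pcompose_scale[OF this]
  have G_int: "n ^ degree f * poly f x = poly G (n * x)" for x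
    using G[where 'a = int, of x] by simp
  have "of_int n ^ degree f * poly (map_poly of_int f) (of_int m / of_int n :: rat) = of_int (poly G m)"
    using G[of "of_int m / of_int n :: rat"] n by (simp add: poly_map_poly_of_int_of_int)
  hence root_iff: "muQ0 (of_int m / of_int n) f = (if poly G m = 0 then 0 else 1)"
    using n by (auto simp: muQ0_def)
  show ?thesis
  proof (rule that[of "nat (max \<bar>n\<bar> \<bar>poly G m\<bar>)"])
    fix p a assume p: "prime p" and large: "nat (max \<bar>n\<bar> \<bar>poly G m\<bar>) < p"
      and a: "[n * a = m] (mod int p)"
    have "\<not> int p dvd n" using large n by (auto dest: dvd_imp_le_int)
    hence "\<not> int p dvd n ^ degree f"
      using p by (metis prime_dvd_power prime_nat_int_transfer)
    moreover have "[n ^ degree f * poly f a = poly G m] (mod int p)"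
      unfolding G_int by (rule cong_poly[OF a])
    moreover have "int p dvd poly G m \<longleftrightarrow> poly G m = 0"
      using large dvd_imp_le_int[of "poly G m" "int p"] by (cases "poly G m = 0") auto
    ultimately have "int p dvd poly f a \<longleftrightarrow> poly G m = 0"
      using p by (metis cong_dvd_iff dvd_mult prime_dvd_mult_iff prime_nat_int_transfer)
    thus "muF p a f = muQ0 (of_int m / of_int n) f"
      unfolding root_iff by (simp add: muF_def cong_0_iff)
  qed
qed

lemma muQ0_eq_0_or_1: "muQ0 r f = 0 \<or> muQ0 r f = 1"
  by (simp add: muQ0_def)

lemma muF_eq_0_or_1: "muF p a f = 0 \<or> muF p a f = 1"
  by (simp add: muF_def)

lemma tendsto_iff_eventually_eq_if_0_1_valued:
  fixes X :: "nat \<Rightarrow> 'a \<Rightarrow> real"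
  assumes X: "\<And>i f. X i f = 0 \<or> X i f = 1" and l: "\<And>f. l f = 0 \<or> l f = 1"
  shows "X \<longlonglongrightarrow> l \<longleftrightarrow> (\<forall>f. eventually (\<lambda>i. X i f = l f) sequentially)"
proof -
  have "(\<lambda>i. X i f) \<longlonglongrightarrow> l f \<longleftrightarrow> eventually (\<lambda>i. X i f = l f) sequentially" for f
  proof
    assume "(\<lambda>i. X i f) \<longlonglongrightarrow> l f"
    hence "eventually (\<lambda>i. dist (X i f) (l f) < 1/2) sequentially" by (rule tendstoD) simp
    thus "eventually (\<lambda>i. X i f = l f) sequentially"
    proof (rule eventually_mono)
      fix i assume "dist (X i f) (l f) < 1/2"
      thus "X i f = l f" using X[of i f] l[of f] by (auto simp: dist_real_def)
    qed
  qed (rule tendsto_eventually)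
  thus ?thesis unfolding tendsto_fun_iff by blast
qed

lemma filterlim_at_top_iff_eventually_gt:
  "filterlim (p :: nat \<Rightarrow> nat) at_top sequentially \<longleftrightarrow> (\<forall>B. eventually (\<lambda>i. B < p i) sequentially)"
  unfolding filterlim_at_top
proof (intro iffI allI)
  fix B assume "\<forall>Z. eventually (\<lambda>i. Z \<le> p i) sequentially"
  from this[rule_format, of "Suc B"] show "eventually (\<lambda>i. B < p i) sequentially"
    by (rule eventually_mono) simp
next
  fix Z assume "\<forall>B. eventually (\<lambda>i. B < p i) sequentially"
  from this[rule_format, of Z] show "eventually (\<lambda>i. Z \<le> p i) sequentially"
    by (rule eventually_mono) simp
qed

lemma frac_mod_eq_iff_cong:
  assumes "prime p" "1 \<le> n" "n < p" "0 \<le> x" "x < int p"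
  shows "frac_mod p m (int n) = x \<longleftrightarrow> [int n * x = m] (mod int p)"
proof -
  have "\<not> int p dvd int n" using assms by (simp add: nat_dvd_not_less)
  thus ?thesis using frac_mod_eq_iff[of p "int n" m x] assms by simp
qed

lemma large_prime_frac_mod_if_muF_eq_muQ0:
  fixes m :: int and n :: nat and p :: "nat \<Rightarrow> nat" and a :: "nat \<Rightarrow> int"
  assumes n: "n \<ge> 1" and p: "\<forall>i. prime (p i)" and a: "\<forall>i. 0 \<le> a i \<and> a i < int (p i)"
    and eq: "\<forall>f. eventually (\<lambda>i. muF (p i) (a i) f = muQ0 (of_int m / of_nat n) f) sequentially"
  shows "filterlim p at_top sequentially"
    and "eventually (\<lambda>i. frac_mod (p i) m (int n) = a i) sequentially"
proof -
  have large: "eventually (\<lambda>i. B < p i) sequentially" for B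
    using eq[rule_format, of "[:fact B:]"]
  proof (rule eventually_mono)
    fix i assume "muF (p i) (a i) [:fact B:] = muQ0 (of_int m / of_nat n) [:fact B:]"
    hence "\<not> int (p i) dvd int (fact B)" by (simp add: muF_const muQ0_const split: if_splits)
    thus "B < p i" using p prime_dvd_fact_iff[of "p i" B] by (simp only: int_dvd_int_iff)
  qed
  thus "filterlim p at_top sequentially" by (simp add: filterlim_at_top_iff_eventually_gt)
  show "eventually (\<lambda>i. frac_mod (p i) m (int n) = a i) sequentially"
    using eq[rule_format, of "[:-m, int n:]"] large[of n]
  proof eventually_elim
    case (elim i)
    hence "[int n * a i = m] (mod int (p i))"
      using n by (simp add: muF_def muQ0_def cong_iff_dvd_diff mult.commute split: if_splits)
    thus ?case using frac_mod_eq_iff_cong[of "p i" n "a i" m] p a n elim(2) by simp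
  qed
qed

lemma muF_eq_muQ0_if_large_prime_frac_mod:
  fixes m :: int and n :: nat and p :: "nat \<Rightarrow> nat" and a :: "nat \<Rightarrow> int"
  assumes n: "n \<ge> 1" and p: "\<forall>i. prime (p i)" and a: "\<forall>i. 0 \<le> a i \<and> a i < int (p i)"
    and large: "filterlim p at_top sequentially"
    and frac: "eventually (\<lambda>i. frac_mod (p i) m (int n) = a i) sequentially"
  shows "eventually (\<lambda>i. muF (p i) (a i) f = muQ0 (of_int m / of_nat n) f) sequentially"
proof -
  obtain B where B: "\<And>p' a'. prime p' \<Longrightarrow> B < p' \<Longrightarrow> [int n * a' = m] (mod int p') \<Longrightarrow>
                        muF p' a' f = muQ0 (of_int m / of_int (int n)) f"
    using muF_eq_muQ0_for_large_primes[where n = "int n" and f = f and m = m] n by auto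
  show ?thesis
    using frac large[unfolded filterlim_at_top_iff_eventually_gt, rule_format, of B]
      large[unfolded filterlim_at_top_iff_eventually_gt, rule_format, of n]
  proof eventually_elim
    case (elim i)
    thus ?case using B[of "p i" "a i"] frac_mod_eq_iff_cong[of "p i" n "a i" m] p a n by simp
  qed
qed

lemma tendsto_muF_muQ0_iff:
  fixes m :: int and n :: nat and p :: "nat \<Rightarrow> nat" and k :: "nat \<Rightarrow> int"
  assumes n: "n \<ge> 1" and p: "\<forall>i. prime (p i)"
  shows "(\<lambda>i. muF (p i) (Phi (p i) (k i))) \<longlonglongrightarrow> muQ0 (of_int m / of_nat n) \<longleftrightarrow>
         filterlim p at_top sequentially \<and>
         (\<exists>i0. \<forall>i\<ge>i0. Phi (p i) (k i) = frac_mod (p i) m (int n))"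
proof -
  have a: "\<forall>i. 0 \<le> Phi (p i) (k i) \<and> Phi (p i) (k i) < int (p i)"
    using p prime_gt_0_nat by (simp add: Phi_def)
  show ?thesis
    unfolding tendsto_iff_eventually_eq_if_0_1_valued[OF muF_eq_0_or_1 muQ0_eq_0_or_1]
      eventually_sequentially[symmetric] eq_commute[of "Phi _ _"]
    using large_prime_frac_mod_if_muF_eq_muQ0[OF n p a] muF_eq_muQ0_if_large_prime_frac_mod[OF n p a]
    by blast
qed

section \<open>Convergence of real points to Q_0\<close>

lemma muQ0_eq_real:
  "muQ0 r f = (if poly (map_poly of_int f) (of_rat r :: real) = 0 then 0 else 1)"
proof -
  have "poly (map_poly of_int f) (of_rat r :: real) = of_rat (poly (map_poly of_int f) r)"
    by (induction f rule: pCons_induct) (simp_all add: of_rat_add of_rat_mult)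
  thus ?thesis by (simp add: muQ0_def)
qed

lemma tendsto_0_if_abs_powr_tendsto_0:
  fixes x v :: "nat \<Rightarrow> real"
  assumes v: "\<And>i. v i \<in> {0<..1}" and lim: "(\<lambda>i. \<bar>x i\<bar> powr v i) \<longlonglongrightarrow> 0"
  shows "x \<longlonglongrightarrow> 0"
proof -
  have "eventually (\<lambda>i. \<bar>x i\<bar> powr v i < 1) sequentially"
    using order_tendstoD(2)[OF lim] by simp
  hence "eventually (\<lambda>i. \<bar>x i\<bar> \<le> \<bar>x i\<bar> powr v i) sequentially"
  proof (rule eventually_mono)
    fix i assume less: "\<bar>x i\<bar> powr v i < 1"
    have "\<bar>x i\<bar> \<le> 1"
      using less ge_one_powr_ge_zero[of "\<bar>x i\<bar>" "v i"] v[of i] by (cases "\<bar>x i\<bar> \<le> 1") auto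
    hence "\<bar>x i\<bar> powr 1 \<le> \<bar>x i\<bar> powr v i" using v[of i] by (intro powr_mono') auto
    thus "\<bar>x i\<bar> \<le> \<bar>x i\<bar> powr v i" by (cases "x i = 0") auto
  qed
  hence "(\<lambda>i. \<bar>x i\<bar>) \<longlonglongrightarrow> 0"
    by (rule tendsto_sandwich[OF _ _ tendsto_const lim, rotated]) simp
  thus ?thesis by (simp add: tendsto_rabs_zero_iff)
qed

text \<open>At a root r of P, factor P = (x - r) Q; then |P(t)|^v is at most |t - r|^v times a
  bounded factor.\<close>

lemma tendsto_abs_poly_powr:
  fixes P :: "real poly" and t v :: "nat \<Rightarrow> real"
  assumes v: "\<And>i. v i \<in> {0<..1}" "v \<longlonglongrightarrow> 0"
    and t: "(\<lambda>i. \<bar>t i - r\<bar> powr v i) \<longlonglongrightarrow> 0"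
  shows "(\<lambda>i. \<bar>poly P (t i)\<bar> powr v i) \<longlonglongrightarrow> (if poly P r = 0 then 0 else 1)"
proof -
  have "(\<lambda>i. t i - r) \<longlonglongrightarrow> 0" by (rule tendsto_0_if_abs_powr_tendsto_0[OF v(1) t])
  hence tr: "t \<longlonglongrightarrow> r" by (simp add: LIM_zero_iff)
  show ?thesis
  proof (cases "poly P r = 0")
    case False
    have "(\<lambda>i. \<bar>poly P (t i)\<bar> powr v i) \<longlonglongrightarrow> \<bar>poly P r\<bar> powr 0"
      using False by (intro tendsto_powr[OF tendsto_rabs[OF isCont_tendsto_compose[OF poly_isCont tr]] v(2)]) simp
    thus ?thesis using False by simp
  next
    case True
    define Q where "Q = synthetic_div P r"
    have PQ: "poly P x = (x - r) * poly Q x" for x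
      using synthetic_div_correct'[of r P, THEN arg_cong[where f = "\<lambda>p. poly p x"]] True
      by (simp add: Q_def algebra_simps)
    define C where "C = \<bar>poly Q r\<bar> + 1"
    have C: "C \<noteq> 0" unfolding C_def by (metis abs_ge_zero add_nonneg_pos zero_less_one less_irrefl)
    have "(\<lambda>i. \<bar>poly Q (t i)\<bar>) \<longlonglongrightarrow> \<bar>poly Q r\<bar>"
      by (rule tendsto_rabs[OF isCont_tendsto_compose[OF poly_isCont tr]])
    hence "eventually (\<lambda>i. \<bar>poly Q (t i)\<bar> < C) sequentially"
      by (rule order_tendstoD(2)) (simp add: C_def)
    hence "eventually (\<lambda>i. \<bar>poly P (t i)\<bar> powr v i \<le> \<bar>t i - r\<bar> powr v i * C powr v i) sequentially"
    proof (rule eventually_mono)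
      fix i assume "\<bar>poly Q (t i)\<bar> < C"
      hence "\<bar>t i - r\<bar> powr v i * \<bar>poly Q (t i)\<bar> powr v i \<le> \<bar>t i - r\<bar> powr v i * C powr v i"
        using v(1)[of i] by (intro mult_left_mono powr_mono2) auto
      thus "\<bar>poly P (t i)\<bar> powr v i \<le> \<bar>t i - r\<bar> powr v i * C powr v i"
        by (simp add: PQ abs_mult powr_mult)
    qed
    moreover have "(\<lambda>i. \<bar>t i - r\<bar> powr v i * C powr v i) \<longlonglongrightarrow> 0"
      using tendsto_mult[OF t tendsto_powr[OF tendsto_const v(2)]] C by simp
    ultimately have "(\<lambda>i. \<bar>poly P (t i)\<bar> powr v i) \<longlonglongrightarrow> 0"
      by (rule tendsto_sandwich[OF _ _ tendsto_const, rotated]) simp_all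
    thus ?thesis using True by simp
  qed
qed

lemma tendsto_muR_muQ0_iff:
  fixes m :: int and n :: nat and v t :: "nat \<Rightarrow> real"
  assumes n: "n \<ge> 1" and v: "\<forall>i. v i \<in> {0<..1}"
  shows "(\<lambda>i. muR (v i) (t i)) \<longlonglongrightarrow> muQ0 (of_int m / of_nat n) \<longleftrightarrow>
         v \<longlonglongrightarrow> 0 \<and> (\<lambda>i. \<bar>t i - of_int m / of_nat n\<bar> powr v i) \<longlonglongrightarrow> 0"
proof -
  define r :: real where "r = of_int m / of_nat n"
  have r: "of_rat (of_int m / of_nat n) = r" unfolding r_def by (simp add: of_rat_divide)
  have nr: "real n * r = of_int m" using n unfolding r_def by simp
  show ?thesis unfolding r_def[symmetric]
  proof
    assume lim: "(\<lambda>i. muR (v i) (t i)) \<longlonglongrightarrow> muQ0 (of_int m / of_nat n)"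
    have "(\<lambda>i. muR (v i) (t i) [:2:]) \<longlonglongrightarrow> muQ0 (of_int m / of_nat n) [:2:]"
      using lim unfolding tendsto_fun_iff by blast
    hence "(\<lambda>i. 2 powr v i) \<longlonglongrightarrow> 1" by (simp add: muR_const muQ0_const)
    hence "(\<lambda>i. ln (2 powr v i) / ln 2) \<longlonglongrightarrow> ln 1 / ln 2" by (intro tendsto_intros) auto
    hence "v \<longlonglongrightarrow> 0" by simp
    have scaled: "(\<lambda>i. real n powr v i * \<bar>t i - r\<bar> powr v i) \<longlonglongrightarrow> 0"
    proof -
      have "\<bar>- of_int m + t i * real n\<bar> powr v i = real n powr v i * \<bar>t i - r\<bar> powr v i" for i
      proof -
        have "- of_int m + t i * real n = real n * (t i - r)" by (simp add: algebra_simps nr[symmetric])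
        thus ?thesis by (simp add: abs_mult powr_mult)
      qed
      moreover have "(\<lambda>i. muR (v i) (t i) [:-m, int n:]) \<longlonglongrightarrow> muQ0 (of_int m / of_nat n) [:-m, int n:]"
        using lim unfolding tendsto_fun_iff by blast
      ultimately show ?thesis using n by (simp add: muR_def muQ0_def)
    qed
    have "(\<lambda>i. \<bar>t i - r\<bar> powr v i) \<longlonglongrightarrow> 0"
    proof (rule tendsto_sandwich[OF always_eventually always_eventually tendsto_const scaled])
      show "\<forall>i. \<bar>t i - r\<bar> powr v i \<le> real n powr v i * \<bar>t i - r\<bar> powr v i"
      proof
        fix i
        have "real n powr v i \<ge> 1" using n v[rule_format, of i] by (intro ge_one_powr_ge_zero) auto
        thus "\<bar>t i - r\<bar> powr v i \<le> real n powr v i * \<bar>t i - r\<bar> powr v i"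
          by (simp add: mult_le_cancel_right1)
      qed
    qed simp
    with \<open>v \<longlonglongrightarrow> 0\<close> show "v \<longlonglongrightarrow> 0 \<and> (\<lambda>i. \<bar>t i - r\<bar> powr v i) \<longlonglongrightarrow> 0" by simp
  next
    assume "v \<longlonglongrightarrow> 0 \<and> (\<lambda>i. \<bar>t i - r\<bar> powr v i) \<longlonglongrightarrow> 0"
    hence "(\<lambda>i. \<bar>poly (map_poly of_int f) (t i)\<bar> powr v i) \<longlonglongrightarrow>
             (if poly (map_poly of_int f) r = 0 then 0 else 1)" for f
      using v by (intro tendsto_abs_poly_powr) auto
    thus "(\<lambda>i. muR (v i) (t i)) \<longlonglongrightarrow> muQ0 (of_int m / of_nat n)"
      unfolding tendsto_fun_iff muR_def muQ0_eq_real r by blast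
  qed
qed

section \<open>Convergence of p-adic points\<close>

lemma muF_eq_if_dvd: "muF p a f = (if int p dvd poly f a then 0 else 1)"
  by (simp add: muF_def cong_0_iff)

lemma muQp_linear:
  assumes p: "prime p" and x: "padic_cauchy p x" and r: "of_int b * r = of_int c"
  shows "muQp p w x [:-c, b:] = (padic_abs p (of_int b) * padic_norm p (\<lambda>j. x j - r)) powr w"
proof -
  have "(\<lambda>j. poly (map_poly of_int [:-c, b:]) (x j)) = (\<lambda>j. of_int b * (x j - r))"
    using r by (auto simp: algebra_simps)
  thus ?thesis by (simp add: muQp_def padic_norm_cmult[OF p padic_cauchy_diff_const[OF x]])
qed

lemma tendsto_powr_at_top_0:
  fixes c :: real
  assumes "0 < c" "c < 1" and w: "filterlim w at_top sequentially"
  shows "(\<lambda>i. c powr w i) \<longlonglongrightarrow> 0"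
proof -
  have "filterlim (\<lambda>i. ln c * w i) at_bot sequentially"
    using assms by (intro filterlim_tendsto_neg_mult_at_bot[OF tendsto_const _ w]) simp
  hence "(\<lambda>i. exp (ln c * w i)) \<longlonglongrightarrow> 0" by (rule filterlim_compose[OF exp_at_bot])
  thus ?thesis using assms by (simp add: powr_def mult.commute)
qed

text \<open>A q-adic number s in a + qZ_q: f(s) is congruent to f(a) modulo q.\<close>

lemma muQp_near_integer:
  assumes q: "prime q" and s: "padic_cauchy q s" and w: "w > 0"
    and near: "padic_norm q (\<lambda>j. s j - of_int a) \<le> 1 / real q"
  shows "\<not> int q dvd poly f a \<Longrightarrow> muQp q w s f = 1"
    and "int q dvd poly f a \<Longrightarrow> muQp q w s f \<le> (1 / real q) powr w"
proof -
  let ?F = "poly (map_poly (of_int :: int \<Rightarrow> rat) f)"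
  have q1: "real q > 1" using prime_gt_1_nat[OF q] by simp
  have Fa: "?F (of_int a) = of_int (poly f a)" by (rule poly_map_poly_of_int_of_int)
  have "1 / real q < 1" using q1 by simp
  hence less: "padic_norm q (\<lambda>j. s j - of_int a) < 1" using near by linarith
  show "muQp q w s f = 1" if "\<not> int q dvd poly f a"
  proof -
    have "padic_norm q (\<lambda>j. ?F (s j)) = padic_abs q (?F (of_int a))"
      using padic_norm_poly_eq[OF q s, of 1 "of_int a" f] padic_abs_of_int_le_1[OF q, of a] less
        padic_abs_of_int_eq_1_iff[OF q, of "poly f a"] that by (simp add: Fa q)
    thus ?thesis using padic_abs_of_int_eq_1_iff[OF q, of "poly f a"] that by (simp add: muQp_def Fa)
  qed
  show "muQp q w s f \<le> (1 / real q) powr w" if "int q dvd poly f a"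
  proof -
    have "padic_abs q (of_int (poly f a)) \<le> 1 / real q"
      using padic_abs_less_1_imp_le[OF q] padic_abs_of_int_le_1[OF q, of "poly f a"]
        padic_abs_of_int_eq_1_iff[OF q, of "poly f a"] that by fastforce
    moreover have "padic_norm q (\<lambda>j. ?F (s j) - ?F (of_int a)) \<le> 1 / real q"
      using padic_norm_poly_diff_le[OF q s less, of 1 f] padic_abs_of_int_le_1[OF q, of a] near
      by (simp add: q)
    ultimately have "padic_norm q (\<lambda>j. ?F (s j)) \<le> 1 / real q"
      using padic_norm_le_max_diff[OF q padic_cauchy_poly[OF q s], of f "?F (of_int a)"]
      by (simp add: Fa)
    thus ?thesis
      unfolding muQp_def using w padic_norm_nonneg[OF q padic_cauchy_poly[OF q s]]
      by (intro powr_mono2) auto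
  qed
qed

lemma padic_norm_powr_less_1_imp_less_1:
  "padic_norm p x powr w < 1 \<Longrightarrow> w > 0 \<Longrightarrow> padic_norm p x < 1"
  using ge_one_powr_ge_zero[of "padic_norm p x" w] by (cases "padic_norm p x < 1") auto

lemma tendsto_muQp_of_prime_0_imp:
  assumes q: "prime q" and H: "\<forall>i. prime (p i) \<and> w i > 0"
    and lim: "(\<lambda>i. muQp (p i) (w i) (s i) [:int q:]) \<longlonglongrightarrow> 0"
  shows "eventually (\<lambda>i. p i = q) sequentially" and "filterlim w at_top sequentially"
proof -
  have q1: "real q > 1" using prime_gt_1_nat[OF q] by simp
  show p_eq: "eventually (\<lambda>i. p i = q) sequentially"
    using order_tendstoD(2)[OF lim zero_less_one]
  proof (rule eventually_mono)
    fix i assume "muQp (p i) (w i) (s i) [:int q:] < 1"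
    thus "p i = q" using muQp_of_nat_prime_other[of "p i" q] H q by (cases "p i = q") auto
  qed
  have val_q: "muQp q (w i) (s i) [:int q:] = (1 / real q) powr w i" for i
    using padic_abs_of_nat_self[OF q] by (simp add: muQp_const)
  show "filterlim w at_top sequentially" unfolding filterlim_at_top
  proof
    fix Z :: real
    have "(1 / real q) powr Z > 0" using q1 by simp
    from order_tendstoD(2)[OF lim this] p_eq show "eventually (\<lambda>i. Z \<le> w i) sequentially"
    proof eventually_elim
      case (elim i)
      show ?case
      proof (rule ccontr)
        assume "\<not> Z \<le> w i"
        hence "(1 / real q) powr Z \<le> (1 / real q) powr w i" using q1 by (intro powr_mono') auto
        thus False using elim val_q[of i] by simp
      qed
    qed
  qed
qed

lemma tendsto_muQp_muF_imp:
  fixes q :: nat and a :: int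
  assumes q: "prime q" and H: "\<forall>i. prime (p i) \<and> w i > 0 \<and> padic_cauchy (p i) (s i)"
    and lim: "(\<lambda>i. muQp (p i) (w i) (s i)) \<longlonglongrightarrow> muF q a"
  shows "filterlim w at_top sequentially"
    and "eventually (\<lambda>i. p i = q \<and> padic_norm q (\<lambda>j. s i j - of_int a) \<le> 1 / real q) sequentially"
proof -
  have lim_f: "(\<lambda>i. muQp (p i) (w i) (s i) f) \<longlonglongrightarrow> 0" if "int q dvd poly f a" for f
    using lim that unfolding tendsto_fun_iff by (metis muF_eq_if_dvd)
  have lim_q: "(\<lambda>i. muQp (p i) (w i) (s i) [:int q:]) \<longlonglongrightarrow> 0" by (rule lim_f) simp
  have pw: "\<forall>i. prime (p i) \<and> w i > 0" using H by simp
  show "filterlim w at_top sequentially" by (rule tendsto_muQp_of_prime_0_imp(2)[OF q pw lim_q])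
  have "(\<lambda>i. muQp (p i) (w i) (s i) [:-a, 1:]) \<longlonglongrightarrow> 0" by (rule lim_f) simp
  moreover have "muQp (p i) (w i) (s i) [:-a, 1:] = padic_norm (p i) (\<lambda>j. s i j - of_int a) powr w i"
    for i using H muQp_linear[of "p i" "s i" 1 "of_int a" a "w i"] by simp
  ultimately have "(\<lambda>i. padic_norm (p i) (\<lambda>j. s i j - of_int a) powr w i) \<longlonglongrightarrow> 0" by simp
  from order_tendstoD(2)[OF this zero_less_one] tendsto_muQp_of_prime_0_imp(1)[OF q pw lim_q]
  show "eventually (\<lambda>i. p i = q \<and> padic_norm q (\<lambda>j. s i j - of_int a) \<le> 1 / real q) sequentially"
  proof eventually_elim
    case (elim i)
    hence "padic_norm q (\<lambda>j. s i j - of_int a) < 1"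
      using H padic_norm_powr_less_1_imp_less_1 by auto
    thus ?case using elim H padic_norm_less_1_imp_le[OF q padic_cauchy_diff_const] by auto
  qed
qed

lemma tendsto_muQp_muF_if:
  fixes q :: nat and a :: int
  assumes q: "prime q" and H: "\<forall>i. prime (p i) \<and> w i > 0 \<and> padic_cauchy (p i) (s i)"
    and w: "filterlim w at_top sequentially"
    and near: "eventually (\<lambda>i. p i = q \<and> padic_norm q (\<lambda>j. s i j - of_int a) \<le> 1 / real q) sequentially"
  shows "(\<lambda>i. muQp (p i) (w i) (s i)) \<longlonglongrightarrow> muF q a"
  unfolding tendsto_fun_iff
proof
  fix f
  show "(\<lambda>i. muQp (p i) (w i) (s i) f) \<longlonglongrightarrow> muF q a f"
  proof (cases "int q dvd poly f a")
    case True
    have "(\<lambda>i. muQp (p i) (w i) (s i) f) \<longlonglongrightarrow> 0"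
    proof (rule tendsto_sandwich[OF _ _ tendsto_const tendsto_powr_at_top_0[OF _ _ w]])
      show "eventually (\<lambda>i. muQp (p i) (w i) (s i) f \<le> (1 / real q) powr w i) sequentially"
        using near by (rule eventually_mono) (use H True muQp_near_integer(2)[OF q] in auto)
    qed (use prime_gt_1_nat[OF q] in \<open>simp_all add: muQp_def\<close>)
    thus ?thesis using True by (simp add: muF_eq_if_dvd)
  next
    case False
    have "eventually (\<lambda>i. muQp (p i) (w i) (s i) f = 1) sequentially"
      using near by (rule eventually_mono) (use H False muQp_near_integer(1)[OF q] in auto)
    thus ?thesis using False by (simp add: muF_eq_if_dvd tendsto_eventually)
  qed
qed

lemma tendsto_muQp_muF_iff:
  fixes q n :: nat and p :: "nat \<Rightarrow> nat" and w :: "nat \<Rightarrow> real" and s :: "nat \<Rightarrow> nat \<Rightarrow> rat"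
  assumes q: "prime q" and H: "\<forall>i. prime (p i) \<and> w i > 0 \<and> padic_cauchy (p i) (s i)"
  shows "(\<lambda>i. muQp (p i) (w i) (s i)) \<longlonglongrightarrow> muF q (Phi q (int n)) \<longleftrightarrow>
         filterlim w at_top sequentially \<and>
         (\<exists>i0. \<forall>i\<ge>i0. p i = q \<and> padic_norm q (\<lambda>j. s i j - of_nat n) \<le> 1 / real q)"
  using tendsto_muQp_muF_imp[OF q H, of "int n"] tendsto_muQp_muF_if[OF q H, of "int n"]
  by (auto simp: muF_Phi eventually_sequentially)

lemma tendsto_muQp_at_root:
  fixes f :: "int poly" and b c :: int and r :: rat
  assumes H: "\<forall>i. prime (p i) \<and> w i > 0 \<and> padic_cauchy (p i) (s i)"
    and r: "of_int b * r = of_int c" "b \<noteq> 0"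
    and units: "\<And>k. k \<noteq> 0 \<Longrightarrow> (\<lambda>i. padic_abs (p i) (of_int k) powr w i) \<longlonglongrightarrow> 1"
    and near: "(\<lambda>i. padic_norm (p i) (\<lambda>j. s i j - r) powr w i) \<longlonglongrightarrow> 0"
    and root: "poly (map_poly of_int f) r = 0"
  shows "(\<lambda>i. muQp (p i) (w i) (s i) f) \<longlonglongrightarrow> 0"
proof -
  define u where "u i = padic_abs (p i) (of_int (b ^ degree f)) powr w i" for i
  have u_pos: "u i > 0" for i using H r(2) padic_abs_pos[of "p i" "of_int (b ^ degree f)"] by (simp add: u_def)
  have "eventually (\<lambda>i. muQp (p i) (w i) (s i) f \<le> padic_norm (p i) (\<lambda>j. s i j - r) powr w i / u i) sequentially"
    using order_tendstoD(2)[OF near zero_less_one]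
  proof (rule eventually_mono)
    fix i assume "padic_norm (p i) (\<lambda>j. s i j - r) powr w i < 1"
    hence "padic_norm (p i) (\<lambda>j. s i j - r) < 1" using H padic_norm_powr_less_1_imp_less_1 by blast
    hence "padic_abs (p i) (of_int b) ^ degree f * padic_norm (p i) (\<lambda>j. poly (map_poly of_int f) (s i j))
           \<le> padic_norm (p i) (\<lambda>j. s i j - r)"
      using padic_norm_poly_diff_le[of "p i" "s i" r b f] H r padic_abs_of_int_le_1[of "p i" c]
      by (simp add: root)
    hence "u i * muQp (p i) (w i) (s i) f \<le> padic_norm (p i) (\<lambda>j. s i j - r) powr w i"
      using H[rule_format, of i] padic_abs_nonneg padic_norm_nonneg[OF _ padic_cauchy_poly]
      by (auto simp: u_def muQp_def padic_abs_power powr_mult[symmetric] intro!: powr_mono2)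
    thus "muQp (p i) (w i) (s i) f \<le> padic_norm (p i) (\<lambda>j. s i j - r) powr w i / u i"
      using u_pos[of i] by (simp add: pos_le_divide_eq mult.commute)
  qed
  moreover have "(\<lambda>i. padic_norm (p i) (\<lambda>j. s i j - r) powr w i / u i) \<longlonglongrightarrow> 0"
    using tendsto_divide[OF near units[of "b ^ degree f"]] r(2) unfolding u_def by simp
  ultimately show ?thesis
    by (rule tendsto_sandwich[OF _ _ tendsto_const, rotated]) (simp add: muQp_def)
qed

lemma tendsto_muQp_at_nonroot:
  fixes f :: "int poly" and b c :: int and r :: rat
  assumes H: "\<forall>i. prime (p i) \<and> w i > 0 \<and> padic_cauchy (p i) (s i)"
    and r: "of_int b * r = of_int c" "b \<noteq> 0"
    and units: "\<And>k. k \<noteq> 0 \<Longrightarrow> (\<lambda>i. padic_abs (p i) (of_int k) powr w i) \<longlonglongrightarrow> 1"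
    and near: "(\<lambda>i. padic_norm (p i) (\<lambda>j. s i j - r) powr w i) \<longlonglongrightarrow> 0"
    and nonroot: "poly (map_poly of_int f) r \<noteq> 0"
  shows "(\<lambda>i. muQp (p i) (w i) (s i) f) \<longlonglongrightarrow> 1"
proof -
  let ?F = "poly (map_poly (of_int :: int \<Rightarrow> rat) f)"
  obtain G where "smult (b ^ degree f) f = G \<circ>\<^sub>p [:0, b:]"
    using smult_power_degree_eq_pcompose by blast
  hence "of_int b ^ degree f * ?F r = of_int (poly G c)"
    using poly_of_int_pcompose_scale[where 'a = rat, of b f G r] r(1)
    by (simp add: poly_map_poly_of_int_of_int)
  then obtain N where N: "of_int (b ^ degree f) * ?F r = of_int N" "N \<noteq> 0"
    using nonroot r(2) by (metis mult_eq_0_iff of_int_0_eq_iff of_int_power power_not_zero)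
  define u where "u i = padic_abs (p i) (of_int (b ^ degree f)) powr w i" for i
  define a where "a i = padic_abs (p i) (of_int N) powr w i" for i
  have abs_N: "padic_abs (p i) (of_int N) = padic_abs (p i) (of_int b) ^ degree f * padic_abs (p i) (?F r)" for i
    using H N(1)[symmetric] by (simp add: padic_abs_mult padic_abs_power)
  have half: "(0::real) < 1/2" "(1/2::real) < 1" by simp_all
  have "eventually (\<lambda>i. muQp (p i) (w i) (s i) f = a i / u i) sequentially"
    using order_tendstoD(2)[OF near half(1)] order_tendstoD(1)[OF units[OF N(2)] half(2)]
  proof eventually_elim
    case (elim i)
    have "padic_norm (p i) (\<lambda>j. s i j - r) < padic_abs (p i) (of_int N)"
    proof (rule ccontr)
      assume "\<not> ?thesis"
      hence "padic_abs (p i) (of_int N) powr w i \<le> padic_norm (p i) (\<lambda>j. s i j - r) powr w i"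
        using H[rule_format, of i] padic_abs_nonneg by (intro powr_mono2) auto
      thus False using elim by simp
    qed
    hence "padic_norm (p i) (\<lambda>j. ?F (s i j)) = padic_abs (p i) (?F r)"
      using padic_norm_poly_eq[of "p i" "s i" b r f] H r padic_abs_of_int_le_1[of "p i" c]
      by (simp add: abs_N)
    moreover have "padic_abs (p i) (of_int b) > 0"
      using H r(2) padic_abs_pos[of "p i" "of_int b"] by simp
    ultimately show ?case
      using H by (simp add: muQp_def a_def u_def abs_N padic_abs_power powr_mult powr_divide)
  qed
  moreover have "(\<lambda>i. a i / u i) \<longlonglongrightarrow> 1"
    using tendsto_divide[OF units[OF N(2)] units[of "b ^ degree f"]] r(2)
    unfolding a_def u_def by simp
  ultimately show ?thesis by (simp add: tendsto_cong)
qed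

lemma units_of_nat_iff_of_int:
  assumes "\<forall>i. prime (p i)"
  shows "(\<forall>k::nat. k \<ge> 1 \<longrightarrow> (\<lambda>i. padic_abs (p i) (of_nat k) powr w i) \<longlonglongrightarrow> 1) \<longleftrightarrow>
         (\<forall>k::int. k \<noteq> 0 \<longrightarrow> (\<lambda>i. padic_abs (p i) (of_int k) powr w i) \<longlonglongrightarrow> 1)"
proof (intro iffI allI impI)
  fix k :: int assume nat: "\<forall>k::nat. k \<ge> 1 \<longrightarrow> (\<lambda>i. padic_abs (p i) (of_nat k) powr w i) \<longlonglongrightarrow> 1"
    and "k \<noteq> 0"
  have "padic_abs (p i) (of_nat (nat \<bar>k\<bar>)) = padic_abs (p i) (of_int k)" for i
    using padic_abs_minus[of "p i" "of_int k"] assms by (cases "k \<ge> 0") auto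
  thus "(\<lambda>i. padic_abs (p i) (of_int k) powr w i) \<longlonglongrightarrow> 1"
    using nat[rule_format, of "nat \<bar>k\<bar>"] \<open>k \<noteq> 0\<close> by simp
next
  fix k :: nat assume int: "\<forall>k::int. k \<noteq> 0 \<longrightarrow> (\<lambda>i. padic_abs (p i) (of_int k) powr w i) \<longlonglongrightarrow> 1"
    and "k \<ge> 1"
  thus "(\<lambda>i. padic_abs (p i) (of_nat k) powr w i) \<longlonglongrightarrow> 1" using int[rule_format, of "int k"] by simp
qed

lemma tendsto_muQp_muQ0_iff:
  fixes m :: int and n :: nat and p :: "nat \<Rightarrow> nat" and w :: "nat \<Rightarrow> real" and s :: "nat \<Rightarrow> nat \<Rightarrow> rat"
  assumes n: "n \<ge> 1" and H: "\<forall>i. prime (p i) \<and> w i > 0 \<and> padic_cauchy (p i) (s i)"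
  shows "(\<lambda>i. muQp (p i) (w i) (s i)) \<longlonglongrightarrow> muQ0 (of_int m / of_nat n) \<longleftrightarrow>
         (\<forall>k::nat. k \<ge> 1 \<longrightarrow> (\<lambda>i. padic_abs (p i) (of_nat k) powr w i) \<longlonglongrightarrow> 1) \<and>
         (\<lambda>i. padic_norm (p i) (\<lambda>j. s i j - of_int m / of_nat n) powr w i) \<longlonglongrightarrow> 0"
proof -
  define r :: rat where "r = of_int m / of_nat n"
  have r: "of_int (int n) * r = of_int m" using n unfolding r_def by simp
  have p: "\<forall>i. prime (p i)" using H by simp
  show ?thesis unfolding units_of_nat_iff_of_int[OF p] r_def[symmetric]
  proof (intro iffI conjI allI impI)
    assume lim: "(\<lambda>i. muQp (p i) (w i) (s i)) \<longlonglongrightarrow> muQ0 r"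
    show units: "(\<lambda>i. padic_abs (p i) (of_int k) powr w i) \<longlonglongrightarrow> 1" if "k \<noteq> 0" for k
    proof -
      have "(\<lambda>i. muQp (p i) (w i) (s i) [:k:]) \<longlonglongrightarrow> muQ0 r [:k:]"
        using lim unfolding tendsto_fun_iff by blast
      thus ?thesis using that by (simp add: muQp_const muQ0_const)
    qed
    have "(\<lambda>i. muQp (p i) (w i) (s i) [:-m, int n:]) \<longlonglongrightarrow> muQ0 r [:-m, int n:]"
      using lim unfolding tendsto_fun_iff by blast
    moreover have "muQ0 r [:-m, int n:] = 0" using r by (simp add: muQ0_def mult.commute)
    ultimately have "(\<lambda>i. muQp (p i) (w i) (s i) [:-m, int n:]) \<longlonglongrightarrow> 0" by simp
    hence "(\<lambda>i. padic_abs (p i) (of_int (int n)) powr w i * padic_norm (p i) (\<lambda>j. s i j - r) powr w i) \<longlonglongrightarrow> 0"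
      using H muQp_linear[OF _ _ r] padic_abs_nonneg padic_norm_nonneg[OF _ padic_cauchy_diff_const]
      by (simp add: powr_mult)
    from tendsto_divide[OF this units[of "int n"]] n
    have "(\<lambda>i. padic_abs (p i) (of_nat n) powr w i * padic_norm (p i) (\<lambda>j. s i j - r) powr w i
             / padic_abs (p i) (of_nat n) powr w i) \<longlonglongrightarrow> 0" by simp
    moreover have "padic_abs (p i) (of_nat n) \<noteq> 0" for i
      using p padic_abs_pos[of "p i" "of_nat n"] n by simp
    ultimately show "(\<lambda>i. padic_norm (p i) (\<lambda>j. s i j - r) powr w i) \<longlonglongrightarrow> 0" by simp
  next
    assume "(\<forall>k::int. k \<noteq> 0 \<longrightarrow> (\<lambda>i. padic_abs (p i) (of_int k) powr w i) \<longlonglongrightarrow> 1) \<and>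
            (\<lambda>i. padic_norm (p i) (\<lambda>j. s i j - r) powr w i) \<longlonglongrightarrow> 0"
    hence units: "\<And>k. k \<noteq> 0 \<Longrightarrow> (\<lambda>i. padic_abs (p i) (of_int k) powr w i) \<longlonglongrightarrow> 1"
      and near: "(\<lambda>i. padic_norm (p i) (\<lambda>j. s i j - r) powr w i) \<longlonglongrightarrow> 0" by auto
    show "(\<lambda>i. muQp (p i) (w i) (s i)) \<longlonglongrightarrow> muQ0 r" unfolding tendsto_fun_iff
    proof
      fix f
      show "(\<lambda>i. muQp (p i) (w i) (s i) f) \<longlonglongrightarrow> muQ0 r f"
        using tendsto_muQp_at_root[OF H r _ units near] tendsto_muQp_at_nonroot[OF H r _ units near] n
        by (simp add: muQ0_def)
    qed
  qed
qed

theorem theorem3p8: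
  fixes q :: nat and m :: int and n :: nat
  assumes "prime q" and "n \<ge> 1" and "gcd m (int n) = 1"
  shows
   "openin (top_of_set Amin) UR \<and>
    openin (top_of_set Amin) (Uq q) \<and>
    openin (top_of_set Amin) (UF q \<union> Uq q) \<and>
    discrete_subspace UQ0 \<and>
    discrete_subspace (\<Union>p\<in>{p. prime p}. UF p) \<and>
    (\<forall>(p :: nat \<Rightarrow> nat) (w :: nat \<Rightarrow> real) (s :: nat \<Rightarrow> nat \<Rightarrow> rat).
       (\<forall>i. prime (p i) \<and> w i > 0 \<and> padic_cauchy (p i) (s i)) \<longrightarrow>
       ((\<lambda>i. muQp (p i) (w i) (s i)) \<longlonglongrightarrow> muF q (Phi q (int n)) \<longleftrightarrow>
        (filterlim w at_top sequentially \<and>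
         (\<exists>i0. \<forall>i\<ge>i0. p i = q \<and> padic_norm q (\<lambda>j. s i j - of_nat n) \<le> 1 / real q)))) \<and>
    (\<forall>(p :: nat \<Rightarrow> nat) (k :: nat \<Rightarrow> int).
       (\<forall>i. prime (p i)) \<longrightarrow>
       ((\<lambda>i. muF (p i) (Phi (p i) (k i))) \<longlonglongrightarrow> muQ0 (of_int m / of_nat n) \<longleftrightarrow>
        (filterlim p at_top sequentially \<and>
         (\<exists>i0. \<forall>i\<ge>i0. Phi (p i) (k i) = frac_mod (p i) m (int n))))) \<and>
    (\<forall>(v :: nat \<Rightarrow> real) (t :: nat \<Rightarrow> real).
       (\<forall>i. v i \<in> {0<..1}) \<longrightarrow>
       ((\<lambda>i. muR (v i) (t i)) \<longlonglongrightarrow> muQ0 (of_int m / of_nat n) \<longleftrightarrow>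
        (v \<longlonglongrightarrow> 0 \<and>
         (\<lambda>i. \<bar>t i - of_int m / of_nat n\<bar> powr v i) \<longlonglongrightarrow> 0))) \<and>
    (\<forall>(p :: nat \<Rightarrow> nat) (w :: nat \<Rightarrow> real) (s :: nat \<Rightarrow> nat \<Rightarrow> rat).
       (\<forall>i. prime (p i) \<and> w i > 0 \<and> padic_cauchy (p i) (s i)) \<longrightarrow>
       ((\<lambda>i. muQp (p i) (w i) (s i)) \<longlonglongrightarrow> muQ0 (of_int m / of_nat n) \<longleftrightarrow>
        ((\<forall>k::nat. k \<ge> 1 \<longrightarrow> (\<lambda>i. padic_abs (p i) (of_nat k) powr w i) \<longlonglongrightarrow> 1) \<and>
         (\<lambda>i. padic_norm (p i) (\<lambda>j. s i j - of_int m / of_nat n) powr w i) \<longlonglongrightarrow> 0)))"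
  using assms(1,2)
  by (simp add: openin_Amin_UR openin_Amin_Uq openin_Amin_UF_Un_Uq discrete_subspace_UQ0
      discrete_subspace_UF tendsto_muQp_muF_iff tendsto_muF_muQ0_iff tendsto_muR_muQ0_iff
      tendsto_muQp_muQ0_iff)

end
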